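(* Let $p,q\in\mathbb{R}$, $j\neq n$ and $M\in\mathcal{K}_o^n$. Then $\widetilde{W}_{p,q,j}(M,N,Q)$ is a valuation in $N$ on $\mathcal{K}_o^n$ and a valuation in $Q$ on $\mathcal{S}_o^n$; that is, for $Q\in\mathcal{S}_o^n$ and $N_1,N_2\in\mathcal{K}_o^n$ with $N_1\cup N_2\in\mathcal{K}_o^n$, $$\widetilde{W}_{p,q,j}(M,N_1\cup N_2,Q)+\widetilde{W}_{p,q,j}(M,N_1\cap N_2,Q)=\widetilde{W}_{p,q,j}(M,N_1,Q)+\widetilde{W}_{p,q,j}(M,N_2,Q),$$ and for $N\in\mathcal{K}_o^n$ and $Q_1,Q_2\in\mathcal{S}_o^n$, $$\widetilde{W}_{p,q,j}(M,N,Q_1\cup Q_2)+\widetilde{W}_{p,q,j}(M,N,Q_1\cap Q_2)=\widetilde{W}_{p,q,j}(M,N,Q_1)+\widetilde{W}_{p,q,j}(M,N,Q_2).$$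
   Context: $\mathcal{K}_o^n$: convex bodies in $\mathbb{R}^n$ containing the origin in their interiors; $\mathcal{S}_o^n$: compact sets star-shaped about the origin with positive continuous radial function $\rho_Q(x)=\max\{\lambda\ge0:\lambda x\in Q\}$. $h_M$ is the support function, $du$ spherical Lebesgue measure; $\alpha_M(u)$ is, for almost every $u\in S^{n-1}$, the unique outer unit normal of $M$ at $\rho_M(u)u$. The $(p,q)$-mixed quermassintegral is $\widetilde{W}_{p,q,j}(M,N,Q)=\frac1n\int_{S^{n-1}}\Big(\frac{h_N(\alpha_M(u))}{h_M(\alpha_M(u))}\Big)^p\rho_M^q(u)\rho_Q^{n-q-j}(u)\,du$. *)

theory Defs
  imports "HOL-Analysis.Analysis"
begin

definition convex_body_o :: "'a::euclidean_space set \<Rightarrow> bool" where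
  "convex_body_o K \<longleftrightarrow> compact K \<and> convex K \<and> 0 \<in> interior K"

definition support_fun :: "'a::euclidean_space set \<Rightarrow> 'a \<Rightarrow> real" where
  "support_fun K v = Sup ((\<lambda>x. x \<bullet> v) ` K)"

definition radial_fun :: "'a::euclidean_space set \<Rightarrow> 'a \<Rightarrow> real" where
  "radial_fun Q x = Sup {t::real. 0 \<le> t \<and> t *\<^sub>R x \<in> Q}"

definition star_body_o :: "'a::euclidean_space set \<Rightarrow> bool" where
  "star_body_o Q \<longleftrightarrow> compact Q \<and> 0 \<in> Q \<and>
     (\<forall>x\<in>Q. \<forall>t::real. 0 \<le> t \<and> t \<le> 1 \<longrightarrow> t *\<^sub>R x \<in> Q) \<and>
     (\<forall>u\<in>sphere 0 1. radial_fun Q u > 0) \<and>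
     continuous_on (sphere 0 1) (radial_fun Q)"

definition outer_unit_normal :: "'a::euclidean_space set \<Rightarrow> 'a \<Rightarrow> 'a \<Rightarrow> bool" where
  "outer_unit_normal K x v \<longleftrightarrow> norm v = 1 \<and> (\<forall>y\<in>K. y \<bullet> v \<le> x \<bullet> v)"

text \<open>Radial Gauss map alpha_K(u): the unique outer unit normal of K at
  rho_K(u) u, when it is unique (which holds for almost every u); otherwise 0
  (a null set, irrelevant for the integral).\<close>
definition radial_gauss :: "'a::euclidean_space set \<Rightarrow> 'a \<Rightarrow> 'a" where
  "radial_gauss K u =
     (if \<exists>!v. outer_unit_normal K (radial_fun K u *\<^sub>R u) v
      then THE v. outer_unit_normal K (radial_fun K u *\<^sub>R u) v else 0)"

text \<open>Integral over the unit sphere with respect to spherical Lebesgue measure,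
  expressed through the cone-measure identity
  int_{S^{n-1}} f du = n * int_{B^n} f(x/|x|) dx.\<close>
definition sphere_integral :: "('a::euclidean_space \<Rightarrow> real) \<Rightarrow> real" where
  "sphere_integral f = real DIM('a) *
     (LINT x | lebesgue. indicator (ball 0 1 - {0}) x * f (x /\<^sub>R norm x))"

definition mixed_quermass :: "real \<Rightarrow> real \<Rightarrow> real \<Rightarrow> 'a::euclidean_space set \<Rightarrow> 'a set \<Rightarrow> 'a set \<Rightarrow> real" where
  "mixed_quermass p q j M N Q = (1 / real DIM('a)) * sphere_integral (\<lambda>u.
      (support_fun N (radial_gauss M u) / support_fun M (radial_gauss M u)) powr p
      * radial_fun M u powr q * radial_fun Q u powr (real DIM('a) - q - j))"

end

theory Submission
  imports Defs
begin

text \<open>Support functions satisfy \<open>h (N1 \<union> N2) = max (h N1) (h N2)\<close> and, when \<open>N1 \<union> N2\<close> is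
  convex, \<open>h (N1 \<inter> N2) = min (h N1) (h N2)\<close>; likewise the radial function of a union or an
  intersection of star bodies is the pointwise max or min. As \<open>f (max a b) + f (min a b) =
  f a + f b\<close> for every \<open>f\<close>, the integrands of the four quermassintegrals satisfy the valuation
  identity pointwise, and it passes to the integrals once the integrands are known to be
  integrable. They are bounded, and they are measurable because the graph of pairs \<open>(u, v)\<close>
  with \<open>v\<close> an outer unit normal of \<open>M\<close> at \<open>\<rho>\<^sub>M(u) u\<close> is compact: hence the set of
  directions with a unique normal is Borel and the radial Gauss map is continuous on it.\<close>

section \<open>Support functions\<close>

lemma bdd_above_inner_image:
  "compact (K::'a::euclidean_space set) \<Longrightarrow> bdd_above ((\<lambda>x. x \<bullet> v) ` K)"
  by (intro bounded_imp_bdd_above compact_imp_bounded compact_continuous_image continuous_intros)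

lemma support_fun_upper: "compact K \<Longrightarrow> x \<in> K \<Longrightarrow> x \<bullet> v \<le> support_fun K v"
  unfolding support_fun_def by (intro cSup_upper bdd_above_inner_image) auto

lemma support_fun_least:
  "K \<noteq> {} \<Longrightarrow> (\<And>x. x \<in> K \<Longrightarrow> x \<bullet> v \<le> c) \<Longrightarrow> support_fun K v \<le> c"
  unfolding support_fun_def by (rule cSup_least) auto

lemma support_fun_attained:
  assumes "compact K" "K \<noteq> {}"
  obtains x where "x \<in> K" "support_fun K v = x \<bullet> v"
proof -
  have "continuous_on K (\<lambda>x. x \<bullet> v)"
    by (intro continuous_intros)
  then obtain x where "x \<in> K" "\<forall>y\<in>K. y \<bullet> v \<le> x \<bullet> v"
    using continuous_attains_sup[OF assms] by blast
  then show thesis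
    using that support_fun_upper[OF assms(1)] support_fun_least[OF assms(2)] by (meson order_antisym)
qed

lemma support_fun_zero: "K \<noteq> {} \<Longrightarrow> support_fun K 0 = 0"
  unfolding support_fun_def by (simp add: image_constant_conv)

lemma support_fun_Un:
  assumes "compact K1" "compact K2" "K1 \<noteq> {}" "K2 \<noteq> {}"
  shows "support_fun (K1 \<union> K2) v = max (support_fun K1 v) (support_fun K2 v)"
  unfolding support_fun_def image_Un
  using assms bdd_above_inner_image[OF assms(1)] bdd_above_inner_image[OF assms(2)]
  by (subst cSup_union_distrib) (auto simp: sup_max)

text \<open>Maximisers of \<open>v\<close> in \<open>K1\<close> and in \<open>K2\<close> are joined by a segment inside \<open>K1 \<union> K2\<close>;
  by connectedness it meets \<open>K1 \<inter> K2\<close>, at a point where \<open>v\<close> is at least the smaller maximum.\<close>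
lemma support_fun_Int:
  fixes K1 K2 :: "'a::euclidean_space set"
  assumes "compact K1" "compact K2" "K1 \<inter> K2 \<noteq> {}" "convex (K1 \<union> K2)"
  shows "support_fun (K1 \<inter> K2) v = min (support_fun K1 v) (support_fun K2 v)"
proof (rule antisym)
  show "support_fun (K1 \<inter> K2) v \<le> min (support_fun K1 v) (support_fun K2 v)"
    using assms by (auto intro!: support_fun_least support_fun_upper)
next
  obtain x1 where x1: "x1 \<in> K1" "support_fun K1 v = x1 \<bullet> v"
    using support_fun_attained[OF assms(1)] assms(3) by blast
  obtain x2 where x2: "x2 \<in> K2" "support_fun K2 v = x2 \<bullet> v"
    using support_fun_attained[OF assms(2)] assms(3) by blast
  have "closed_segment x1 x2 \<subseteq> K1 \<union> K2"
    using assms(4) x1 x2 by (intro closed_segment_subset) auto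
  moreover have "closed K1" "closed K2"
    using assms(1,2) by (auto intro: compact_imp_closed)
  moreover have "K1 \<inter> closed_segment x1 x2 \<noteq> {}" "K2 \<inter> closed_segment x1 x2 \<noteq> {}"
    using x1 x2 by auto
  ultimately obtain z where z: "z \<in> K1 \<inter> K2" "z \<in> closed_segment x1 x2"
    using connected_closed[of "closed_segment x1 x2"] by (metis connected_segment disjoint_iff)
  then obtain t where t: "0 \<le> t" "t \<le> 1" "z = (1 - t) *\<^sub>R x1 + t *\<^sub>R x2"
    unfolding closed_segment_def by auto
  have "min (x1 \<bullet> v) (x2 \<bullet> v) = (1 - t) * min (x1 \<bullet> v) (x2 \<bullet> v) + t * min (x1 \<bullet> v) (x2 \<bullet> v)"
    by (simp add: algebra_simps)
  also have "\<dots> \<le> (1 - t) * (x1 \<bullet> v) + t * (x2 \<bullet> v)"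
    using t(1,2) by (intro add_mono mult_left_mono) auto
  also have "\<dots> = z \<bullet> v"
    using t(3) by (simp add: inner_add_left)
  also have "\<dots> \<le> support_fun (K1 \<inter> K2) v"
    using z assms(1,2) by (intro support_fun_upper compact_Int) auto
  finally show "min (support_fun K1 v) (support_fun K2 v) \<le> support_fun (K1 \<inter> K2) v"
    using x1 x2 by simp
qed

lemma lipschitz_on_support_fun:
  fixes K :: "'a::euclidean_space set"
  assumes "compact K" "K \<noteq> {}" "\<And>x. x \<in> K \<Longrightarrow> norm x \<le> R" "0 \<le> R"
  shows "R-lipschitz_on UNIV (support_fun K)"
proof -
  have le: "support_fun K v \<le> support_fun K w + R * dist v w" for v w
  proof (rule support_fun_least[OF assms(2)])
    fix x assume "x \<in> K"
    have "x \<bullet> v = x \<bullet> w + x \<bullet> (v - w)"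
      by (simp add: inner_diff_right)
    also have "x \<bullet> (v - w) \<le> R * dist v w"
      using norm_cauchy_schwarz[of x "v - w"] assms(3)[OF \<open>x \<in> K\<close>]
      by (simp add: dist_norm mult_right_mono order_trans)
    finally show "x \<bullet> v \<le> support_fun K w + R * dist v w"
      using support_fun_upper[OF assms(1) \<open>x \<in> K\<close>, of w] by linarith
  qed
  show ?thesis
  proof (rule lipschitz_onI)
    fix v w
    show "dist (support_fun K v) (support_fun K w) \<le> R * dist v w"
      using le[of v w] le[of w v] by (simp add: dist_real_def dist_commute abs_le_iff)
  qed (rule assms(4))
qed

lemma continuous_on_support_fun:
  fixes K :: "'a::euclidean_space set"
  assumes "compact K" "K \<noteq> {}"
  shows "continuous_on S (support_fun K)"
proof -
  obtain R where "\<And>x. x \<in> K \<Longrightarrow> norm x \<le> R" "R > 0"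
    using compact_imp_bounded[OF assms(1)] bounded_pos by metis
  then have "continuous_on UNIV (support_fun K)"
    using lipschitz_on_support_fun[OF assms] lipschitz_on_continuous_on by (meson less_imp_le)
  then show ?thesis
    by (rule continuous_on_subset) simp
qed

lemma support_fun_pos:
  fixes K :: "'a::euclidean_space set"
  assumes "compact K" "0 \<in> interior K" "v \<noteq> 0"
  shows "support_fun K v > 0"
proof -
  obtain e where e: "e > 0" "ball 0 e \<subseteq> K"
    using assms(2) mem_interior by blast
  have "(e / 2 / norm v) *\<^sub>R v \<in> K"
    using e assms(3) by (intro subsetD[OF e(2)]) auto
  moreover have "((e / 2 / norm v) *\<^sub>R v) \<bullet> v = e / 2 * norm v"
    using assms(3) by (simp add: power2_norm_eq_inner[symmetric] power2_eq_square)
  ultimately show ?thesis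
    using support_fun_upper[OF assms(1)] e(1) assms(3)
    by (metis half_gt_zero mult_pos_pos order_less_le_trans zero_less_norm_iff)
qed

section \<open>Radial functions\<close>

lemma
  fixes Q :: "'a::euclidean_space set"
  assumes "compact Q" "0 \<in> Q" "u \<noteq> 0"
  shows radial_fun_nonneg: "0 \<le> radial_fun Q u"
    and radial_fun_scaleR_mem: "radial_fun Q u *\<^sub>R u \<in> Q"
    and radial_fun_upper: "0 \<le> t \<Longrightarrow> t *\<^sub>R u \<in> Q \<Longrightarrow> t \<le> radial_fun Q u"
proof -
  let ?A = "{t::real. 0 \<le> t \<and> t *\<^sub>R u \<in> Q}"
  obtain R where R: "\<And>x. x \<in> Q \<Longrightarrow> norm x \<le> R"
    using compact_imp_bounded[OF assms(1)] bounded_iff by metis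
  have bdd: "bdd_above ?A"
  proof (rule bdd_aboveI)
    fix t assume "t \<in> ?A"
    then have "t * norm u \<le> R"
      using R[of "t *\<^sub>R u"] by auto
    then show "t \<le> R / norm u"
      using assms(3) by (simp add: field_simps)
  qed
  have "?A = {0..} \<inter> (\<lambda>t. t *\<^sub>R u) -` Q"
    by auto
  moreover have "closed ((\<lambda>t. t *\<^sub>R u) -` Q)"
    using compact_imp_closed[OF assms(1)] by (intro continuous_closed_vimage continuous_intros)
  ultimately have "closed ?A"
    by (simp add: closed_Int)
  then have "Sup ?A \<in> ?A"
    using assms(2) bdd by (intro closed_contains_Sup) auto
  then show "0 \<le> radial_fun Q u" "radial_fun Q u *\<^sub>R u \<in> Q"
    unfolding radial_fun_def by auto
  show "0 \<le> t \<Longrightarrow> t *\<^sub>R u \<in> Q \<Longrightarrow> t \<le> radial_fun Q u"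
    unfolding radial_fun_def using bdd by (auto intro: cSup_upper)
qed

lemma radial_fun_le_imp_mem:
  fixes Q :: "'a::euclidean_space set"
  assumes "compact Q" "0 \<in> Q" "u \<noteq> 0"
    and star: "\<forall>x\<in>Q. \<forall>s::real. 0 \<le> s \<and> s \<le> 1 \<longrightarrow> s *\<^sub>R x \<in> Q"
    and "0 \<le> t" "t \<le> radial_fun Q u"
  shows "t *\<^sub>R u \<in> Q"
proof (cases "radial_fun Q u = 0")
  case True
  then show ?thesis
    using assms(2,5,6) by auto
next
  case False
  then have "0 < radial_fun Q u"
    using radial_fun_nonneg[OF assms(1-3)] by simp
  moreover have "0 \<le> t / radial_fun Q u" "t / radial_fun Q u \<le> 1"
    using assms(5,6) \<open>0 < radial_fun Q u\<close> by auto
  ultimately have "(t / radial_fun Q u) *\<^sub>R (radial_fun Q u *\<^sub>R u) \<in> Q"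
    using star radial_fun_scaleR_mem[OF assms(1-3)] by blast
  then show ?thesis
    using \<open>0 < radial_fun Q u\<close> by simp
qed

lemma radial_fun_Un:
  fixes Q1 Q2 :: "'a::euclidean_space set"
  assumes "compact Q1" "compact Q2" "0 \<in> Q1" "0 \<in> Q2" "u \<noteq> 0"
  shows "radial_fun (Q1 \<union> Q2) u = max (radial_fun Q1 u) (radial_fun Q2 u)"
proof -
  have Q: "compact (Q1 \<union> Q2)" "0 \<in> Q1 \<union> Q2"
    using assms by auto
  have "radial_fun (Q1 \<union> Q2) u \<le> radial_fun Q1 u \<or> radial_fun (Q1 \<union> Q2) u \<le> radial_fun Q2 u"
    using radial_fun_scaleR_mem[OF Q assms(5)] radial_fun_nonneg[OF Q assms(5)]
      radial_fun_upper[OF assms(1,3,5)] radial_fun_upper[OF assms(2,4,5)] by blast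
  moreover have "radial_fun Q1 u \<le> radial_fun (Q1 \<union> Q2) u" "radial_fun Q2 u \<le> radial_fun (Q1 \<union> Q2) u"
    using radial_fun_scaleR_mem[OF assms(1,3,5)] radial_fun_nonneg[OF assms(1,3,5)]
      radial_fun_scaleR_mem[OF assms(2,4,5)] radial_fun_nonneg[OF assms(2,4,5)]
    by (auto intro: radial_fun_upper[OF Q assms(5)])
  ultimately show ?thesis
    by linarith
qed

lemma radial_fun_Int:
  fixes Q1 Q2 :: "'a::euclidean_space set"
  assumes "compact Q1" "compact Q2" "0 \<in> Q1" "0 \<in> Q2" "u \<noteq> 0"
    and "\<forall>x\<in>Q1. \<forall>s::real. 0 \<le> s \<and> s \<le> 1 \<longrightarrow> s *\<^sub>R x \<in> Q1"
    and "\<forall>x\<in>Q2. \<forall>s::real. 0 \<le> s \<and> s \<le> 1 \<longrightarrow> s *\<^sub>R x \<in> Q2"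
  shows "radial_fun (Q1 \<inter> Q2) u = min (radial_fun Q1 u) (radial_fun Q2 u)"
proof -
  let ?m = "min (radial_fun Q1 u) (radial_fun Q2 u)"
  have Q: "compact (Q1 \<inter> Q2)" "0 \<in> Q1 \<inter> Q2"
    using assms by auto
  have "0 \<le> ?m"
    using radial_fun_nonneg[OF assms(1,3,5)] radial_fun_nonneg[OF assms(2,4,5)] by simp
  then have "?m *\<^sub>R u \<in> Q1 \<inter> Q2"
    using radial_fun_le_imp_mem[OF assms(1,3,5,6)] radial_fun_le_imp_mem[OF assms(2,4,5,7)] by simp
  then have "?m \<le> radial_fun (Q1 \<inter> Q2) u"
    using \<open>0 \<le> ?m\<close> by (rule radial_fun_upper[OF Q assms(5), rotated])
  moreover have "radial_fun (Q1 \<inter> Q2) u \<le> ?m"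
    using radial_fun_scaleR_mem[OF Q assms(5)] radial_fun_nonneg[OF Q assms(5)]
      radial_fun_upper[OF assms(1,3,5)] radial_fun_upper[OF assms(2,4,5)] by simp
  ultimately show ?thesis
    by linarith
qed

lemma star_body_o_radial_fun_Un:
  "star_body_o Q1 \<Longrightarrow> star_body_o Q2 \<Longrightarrow> u \<noteq> 0 \<Longrightarrow>
    radial_fun (Q1 \<union> Q2) u = max (radial_fun Q1 u) (radial_fun Q2 u)"
  unfolding star_body_o_def by (intro radial_fun_Un) auto

lemma star_body_o_radial_fun_Int:
  "star_body_o Q1 \<Longrightarrow> star_body_o Q2 \<Longrightarrow> u \<noteq> 0 \<Longrightarrow>
    radial_fun (Q1 \<inter> Q2) u = min (radial_fun Q1 u) (radial_fun Q2 u)"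
  unfolding star_body_o_def by (intro radial_fun_Int) auto

lemma star_body_o_Un:
  fixes Q1 Q2 :: "'a::euclidean_space set"
  assumes "star_body_o Q1" "star_body_o Q2"
  shows "star_body_o (Q1 \<union> Q2)"
proof -
  have max_eq: "radial_fun (Q1 \<union> Q2) u = max (radial_fun Q1 u) (radial_fun Q2 u)"
    if "u \<in> sphere 0 1" for u
    using that by (intro star_body_o_radial_fun_Un[OF assms]) auto
  have "continuous_on (sphere 0 1) (\<lambda>u. max (radial_fun Q1 u) (radial_fun Q2 u))"
    using assms unfolding star_body_o_def by (intro continuous_on_max) auto
  then have "continuous_on (sphere 0 1) (radial_fun (Q1 \<union> Q2))"
    by (rule continuous_on_eq) (simp add: max_eq)
  with assms max_eq show ?thesis
    unfolding star_body_o_def by (auto simp: less_max_iff_disj)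
qed

lemma convex_body_o_zero_mem: "convex_body_o M \<Longrightarrow> 0 \<in> M"
  unfolding convex_body_o_def using interior_subset by blast

lemma radial_fun_convex_body_o_pos:
  fixes M :: "'a::euclidean_space set"
  assumes M: "convex_body_o M" and u: "u \<noteq> 0"
  shows "0 < radial_fun M u"
proof -
  have "0 \<in> interior M"
    using M by (simp add: convex_body_o_def)
  then obtain e where e: "e > 0" "ball 0 e \<subseteq> M"
    using mem_interior by blast
  have "(e / 2 / norm u) *\<^sub>R u \<in> M"
    using e u by (intro subsetD[OF e(2)]) auto
  then have "e / 2 / norm u \<le> radial_fun M u"
    using M e u convex_body_o_zero_mem[OF M]
    by (intro radial_fun_upper) (auto simp: convex_body_o_def)
  then show ?thesis
    using e u by (meson divide_pos_pos half_gt_zero order_less_le_trans zero_less_norm_iff)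
qed

lemma radial_point_not_interior:
  fixes M :: "'a::euclidean_space set"
  assumes M: "convex_body_o M" and u: "u \<noteq> 0"
  shows "radial_fun M u *\<^sub>R u \<notin> interior M"
proof
  assume "radial_fun M u *\<^sub>R u \<in> interior M"
  then obtain d where d: "d > 0" "ball (radial_fun M u *\<^sub>R u) d \<subseteq> M"
    using mem_interior by blast
  have "(radial_fun M u + d / 2 / norm u) *\<^sub>R u \<in> M"
    using d u by (intro subsetD[OF d(2)]) (auto simp: dist_norm algebra_simps)
  then have "radial_fun M u + d / 2 / norm u \<le> radial_fun M u"
    using M u d radial_fun_convex_body_o_pos[OF M u] convex_body_o_zero_mem[OF M]
    by (intro radial_fun_upper) (auto simp: convex_body_o_def)
  then show False
    using d u by (auto simp: divide_le_0_iff)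
qed

lemma scaleR_mem_interior_below_radial_fun:
  fixes M :: "'a::euclidean_space set"
  assumes M: "convex_body_o M" and u: "u \<noteq> 0" and t: "0 < t" "t < radial_fun M u"
  shows "t *\<^sub>R u \<in> interior M"
proof -
  have M': "compact M" "convex M" "0 \<in> interior M" "closure M = M"
    using M by (auto simp: convex_body_o_def compact_imp_closed)
  have "radial_fun M u *\<^sub>R u \<in> closure M"
    using M' convex_body_o_zero_mem[OF M] u by (simp add: radial_fun_scaleR_mem)
  then have "radial_fun M u *\<^sub>R u - (1 - t / radial_fun M u) *\<^sub>R (radial_fun M u *\<^sub>R u - 0)
      \<in> interior M"
    using t by (intro mem_interior_closure_convex_shrink[OF M'(2,3)]) auto
  then show ?thesis
    using t by (simp add: algebra_simps)
qed

lemma convex_body_o_frontier_iff: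
  fixes M :: "'a::euclidean_space set"
  assumes M: "convex_body_o M" and u: "u \<noteq> 0"
  shows "0 < k \<and> k *\<^sub>R u \<in> frontier M \<longleftrightarrow> radial_fun M u = k"
proof -
  have "compact M" "0 \<in> M" "closure M = M"
    using M convex_body_o_zero_mem[OF M] by (auto simp: convex_body_o_def compact_imp_closed)
  note upper = radial_fun_upper[OF this(1,2) u] and mem = radial_fun_scaleR_mem[OF this(1,2) u]
  show ?thesis
  proof
    assume k: "0 < k \<and> k *\<^sub>R u \<in> frontier M"
    then have "k *\<^sub>R u \<in> M" "k *\<^sub>R u \<notin> interior M"
      using \<open>closure M = M\<close> by (auto simp: frontier_def)
    then show "radial_fun M u = k"
      using upper[of k] scaleR_mem_interior_below_radial_fun[OF M u, of k] k by force
  next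
    assume "radial_fun M u = k"
    then show "0 < k \<and> k *\<^sub>R u \<in> frontier M"
      using radial_fun_convex_body_o_pos[OF M u] mem radial_point_not_interior[OF M u] \<open>closure M = M\<close>
      by (auto simp: frontier_def)
  qed
qed

lemma continuous_on_radial_point:
  fixes M :: "'a::euclidean_space set"
  assumes "convex_body_o M"
  shows "continuous_on (UNIV - {0}) (\<lambda>x. radial_fun M x *\<^sub>R x)"
proof (rule continuous_on_compact_surface_projection[where S = "frontier M"])
  show "compact (frontier M)"
    using assms by (simp add: convex_body_o_def compact_frontier)
  show "frontier M \<subseteq> UNIV - {0}"
    using assms by (auto simp: convex_body_o_def frontier_def)
  show "cone (UNIV::'a set)"
    by (simp add: cone_def)
qed (use convex_body_o_frontier_iff[OF assms] in blast)

lemma continuous_on_radial_fun: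
  fixes M :: "'a::euclidean_space set"
  assumes "convex_body_o M"
  shows "continuous_on (sphere 0 1) (radial_fun M)"
proof -
  have "continuous_on (sphere 0 1) (\<lambda>x. norm (radial_fun M x *\<^sub>R x))"
    by (intro continuous_on_norm continuous_on_subset[OF continuous_on_radial_point[OF assms]]) auto
  moreover have "norm (radial_fun M x *\<^sub>R x) = radial_fun M x" if "x \<in> sphere 0 1" for x
  proof -
    have "x \<noteq> 0"
      using that by auto
    then show ?thesis
      using that radial_fun_convex_body_o_pos[OF assms \<open>x \<noteq> 0\<close>] by simp
  qed
  ultimately show ?thesis
    by (rule continuous_on_eq)
qed

section \<open>Compact graphs and the radial Gauss map\<close>

lemma compact_fiber_pairs_apart:
  fixes G :: "('a::metric_space \<times> 'b::metric_space) set"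
  assumes "compact G"
  shows "compact {(u, v, w). (u, v) \<in> G \<and> (u, w) \<in> G \<and> r \<le> dist v w}"
proof -
  define D where "D = {x. (fst x, fst (snd x)) \<in> G \<and> (fst x, snd (snd x)) \<in> G
    \<and> r \<le> dist (fst (snd x)) (snd (snd x))}"
  have "D = (fst ` G \<times> (snd ` G \<times> snd ` G)) \<inter> D"
    unfolding D_def by force
  moreover have "compact (fst ` G \<times> (snd ` G \<times> snd ` G))"
    using assms by (intro compact_Times compact_continuous_image continuous_intros)
  moreover have "D = (\<lambda>x. (fst x, fst (snd x))) -` G \<inter> (\<lambda>x. (fst x, snd (snd x))) -` G
      \<inter> {x. r \<le> dist (fst (snd x)) (snd (snd x))}"
    unfolding D_def by auto
  then have "closed D"
    using compact_imp_closed[OF assms]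
    by (simp only:) (intro closed_Int continuous_closed_vimage closed_Collect_le continuous_intros)
  ultimately have "compact D"
    by (metis compact_Int_closed)
  moreover have "D = {(u, v, w). (u, v) \<in> G \<and> (u, w) \<in> G \<and> r \<le> dist v w}"
    unfolding D_def by (rule Collect_cong) (simp add: split_beta)
  ultimately show ?thesis
    by simp
qed

text \<open>Non-uniqueness over \<open>u\<close> means two points of the fiber at distance at least
  \<open>1 / (k + 1)\<close> for some \<open>k\<close>, a countable union of projections of compact sets.\<close>
lemma borel_unique_fiber:
  fixes G :: "('a::metric_space \<times> 'b::metric_space) set"
  assumes "compact G"
  shows "{u. \<exists>!v. (u, v) \<in> G} \<in> sets borel"
proof -
  define D where "D k = {(u, v, w). (u, v) \<in> G \<and> (u, w) \<in> G \<and> inverse (real (Suc k)) \<le> dist v w}"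
    for k
  have closed_fst: "closed (fst ` K)" if "compact K" for K :: "('a \<times> 'c::metric_space) set"
    using that by (intro compact_imp_closed compact_continuous_image continuous_intros)
  have "{u. \<exists>!v. (u, v) \<in> G} = fst ` G - (\<Union>k. fst ` D k)"
  proof (intro set_eqI iffI)
    fix u assume "u \<in> fst ` G - (\<Union>k. fst ` D k)"
    then obtain v where v: "(u, v) \<in> G" and not_apart: "\<And>k. u \<notin> fst ` D k"
      by force
    have "w = v" if "(u, w) \<in> G" for w
    proof (rule ccontr)
      assume "w \<noteq> v"
      then have "0 < dist w v"
        by simp
      then obtain k where "inverse (real (Suc k)) < dist w v"
        using reals_Archimedean by blast
      then have "(u, w, v) \<in> D k"
        using that v by (simp add: D_def)
      then show False
        using not_apart by (metis fst_conv image_eqI)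
    qed
    with v show "u \<in> {u. \<exists>!v. (u, v) \<in> G}"
      by blast
  next
    fix u assume "u \<in> {u. \<exists>!v. (u, v) \<in> G}"
    then obtain v where v: "(u, v) \<in> G" and unique: "\<And>w. (u, w) \<in> G \<Longrightarrow> w = v"
      by blast
    have "u \<notin> fst ` D k" for k
    proof
      assume "u \<in> fst ` D k"
      then obtain w w' where "(u, w) \<in> G" "(u, w') \<in> G" "inverse (real (Suc k)) \<le> dist w w'"
        unfolding D_def by auto
      then show False
        using unique by (metis dist_self inverse_positive_iff_positive not_le of_nat_0_less_iff zero_less_Suc)
    qed
    moreover have "u \<in> fst ` G"
      using v by (metis fst_conv image_eqI)
    ultimately show "u \<in> fst ` G - (\<Union>k. fst ` D k)"
      by blast
  qed
  moreover have "closed (fst ` D k)" for k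
    unfolding D_def by (rule closed_fst[OF compact_fiber_pairs_apart[OF assms]])
  ultimately show ?thesis
    using closed_fst[OF assms] by (simp add: sets.Diff sets.countable_UN image_subsetI borel_closed)
qed

lemma continuous_on_unique_fiber:
  fixes f :: "'a::euclidean_space \<Rightarrow> 'b::euclidean_space"
  assumes "compact G" "\<And>u. u \<in> S \<Longrightarrow> (u, f u) \<in> G" "\<And>u v. u \<in> S \<Longrightarrow> (u, v) \<in> G \<Longrightarrow> v = f u"
  shows "continuous_on S f"
proof -
  have compact_snd: "compact (snd ` G)"
    using assms(1) by (intro compact_continuous_image continuous_on_snd continuous_on_id)
  have range: "f \<in> S \<rightarrow> snd ` G"
    using assms(2) by (metis Pi_I image_eqI snd_conv)
  have "(\<lambda>x. (x, f x)) ` S = (S \<times> snd ` G) \<inter> G"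
  proof (intro set_eqI iffI)
    fix p assume "p \<in> (\<lambda>x. (x, f x)) ` S"
    then obtain u where "u \<in> S" "p = (u, f u)"
      by blast
    then show "p \<in> (S \<times> snd ` G) \<inter> G"
      using assms(2) range by auto
  next
    fix p assume "p \<in> (S \<times> snd ` G) \<inter> G"
    then obtain u v where "p = (u, v)" "u \<in> S" "(u, v) \<in> G"
      by auto
    then show "p \<in> (\<lambda>x. (x, f x)) ` S"
      using assms(3) by auto
  qed
  then have "closedin (top_of_set (S \<times> snd ` G)) ((\<lambda>x. (x, f x)) ` S)"
    using compact_imp_closed[OF assms(1)] by (simp add: closedin_closed_Int)
  then show ?thesis
    by (rule continuous_closed_graph_eq[OF compact_snd range, THEN iffD2])
qed

definition normal_graph :: "'a::euclidean_space set \<Rightarrow> ('a \<times> 'a) set" where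
  "normal_graph M = {(u, v). u \<in> sphere 0 1 \<and> outer_unit_normal M (radial_fun M u *\<^sub>R u) v}"

lemma compact_normal_graph:
  fixes M :: "'a::euclidean_space set"
  assumes "convex_body_o M"
  shows "compact (normal_graph M)"
proof -
  let ?S = "sphere (0::'a) 1 \<times> sphere (0::'a) 1"
  let ?h = "\<lambda>p. (radial_fun M (fst p) *\<^sub>R fst p) \<bullet> snd p"
  have "normal_graph M = ?S \<inter> (\<Inter>y\<in>M. {p \<in> ?S. y \<bullet> snd p \<le> ?h p})"
    unfolding normal_graph_def outer_unit_normal_def by auto
  moreover have "continuous_on ?S (\<lambda>p. radial_fun M (fst p) *\<^sub>R fst p)"
    by (rule continuous_on_compose2[OF continuous_on_radial_point[OF assms] continuous_on_fst]) auto
  then have "continuous_on ?S ?h"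
    using continuous_on_snd[OF continuous_on_id] by (rule continuous_on_inner)
  then have "closed {p \<in> ?S. y \<bullet> snd p \<le> ?h p}" for y
    by (rule continuous_on_closed_Collect_le[OF continuous_on_inner[OF continuous_on_const
          continuous_on_snd[OF continuous_on_id]]]) (intro closed_Times closed_sphere)
  ultimately show ?thesis
    by (simp add: compact_Int_closed compact_Times closed_INT)
qed

lemma radial_gauss_normal_graph:
  assumes "u \<in> sphere 0 1"
  shows "radial_gauss M u = (if \<exists>!v. (u, v) \<in> normal_graph M then THE v. (u, v) \<in> normal_graph M else 0)"
  using assms by (simp add: radial_gauss_def normal_graph_def)

definition regular_directions :: "'a::euclidean_space set \<Rightarrow> 'a set" where
  "regular_directions M = {u. \<exists>!v. (u, v) \<in> normal_graph M}"

lemma regular_directions_subset_sphere: "regular_directions M \<subseteq> sphere 0 1"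
  by (auto simp: regular_directions_def normal_graph_def)

lemma radial_gauss_regular:
  assumes "u \<in> regular_directions M"
  shows "(u, radial_gauss M u) \<in> normal_graph M" "radial_gauss M u \<in> sphere 0 1"
  using assms regular_directions_subset_sphere theI'[of "\<lambda>v. (u, v) \<in> normal_graph M"]
  by (auto simp: regular_directions_def radial_gauss_normal_graph normal_graph_def outer_unit_normal_def)

lemma radial_gauss_singular:
  "u \<in> sphere 0 1 \<Longrightarrow> u \<notin> regular_directions M \<Longrightarrow> radial_gauss M u = 0"
  by (simp add: regular_directions_def radial_gauss_normal_graph)

lemma borel_regular_directions: "convex_body_o M \<Longrightarrow> regular_directions M \<in> sets borel"
  unfolding regular_directions_def by (intro borel_unique_fiber compact_normal_graph)

lemma continuous_on_radial_gauss:
  assumes "convex_body_o M"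
  shows "continuous_on (regular_directions M) (radial_gauss M)"
proof (rule continuous_on_unique_fiber[OF compact_normal_graph[OF assms]])
  fix u v assume "u \<in> regular_directions M" "(u, v) \<in> normal_graph M"
  then show "v = radial_gauss M u"
    using radial_gauss_regular(1) by (auto simp: regular_directions_def)
qed (rule radial_gauss_regular(1))

section \<open>Integration over the sphere\<close>

definition sphere_integrable :: "('a::euclidean_space \<Rightarrow> real) \<Rightarrow> bool" where
  "sphere_integrable f \<longleftrightarrow> integrable lebesgue (\<lambda>x. indicator (ball 0 1 - {0}) x * f (x /\<^sub>R norm x))"

lemma sphere_integrableI:
  fixes f g :: "'a::euclidean_space \<Rightarrow> real"
  assumes "g \<in> borel_measurable borel"
    and "\<And>u. u \<in> sphere 0 1 \<Longrightarrow> f u = g u" "\<And>u. u \<in> sphere 0 1 \<Longrightarrow> \<bar>f u\<bar> \<le> B"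
  shows "sphere_integrable f"
proof -
  have "integrable lborel (\<lambda>x. indicator (ball 0 1 - {0}) x *\<^sub>R g (x /\<^sub>R norm x))"
  proof (rule integrableI_bounded_set_indicator)
    show "(\<lambda>x. g (x /\<^sub>R norm x)) \<in> borel_measurable lborel"
      using assms(1) by measurable
    show "emeasure lborel (ball (0::'a) 1 - {0}) < \<infinity>"
      by (rule order_le_less_trans[OF emeasure_mono emeasure_bounded_finite[of "ball (0::'a) 1"]]) auto
    show "AE x in lborel. x \<in> ball 0 1 - {0} \<longrightarrow> norm (g (x /\<^sub>R norm x)) \<le> B"
      using assms(2,3) by simp
  qed simp
  then have "integrable lebesgue (\<lambda>x. indicator (ball 0 1 - {0}) x *\<^sub>R g (x /\<^sub>R norm x))"
    using integrable_completion borel_measurable_integrable by blast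
  moreover have "(\<lambda>x. indicator (ball 0 1 - {0}) x * f (x /\<^sub>R norm x))
      = (\<lambda>x. indicator (ball 0 1 - {0}) x *\<^sub>R g (x /\<^sub>R norm x))"
  proof
    fix x :: 'a
    show "indicator (ball 0 1 - {0}) x * f (x /\<^sub>R norm x)
        = indicator (ball 0 1 - {0}) x *\<^sub>R g (x /\<^sub>R norm x)"
      using assms(2)[of "x /\<^sub>R norm x"] by (cases "x = 0") (auto simp: indicator_def)
  qed
  ultimately show ?thesis
    unfolding sphere_integrable_def by simp
qed

lemma sphere_integral_valuation:
  fixes f g h k :: "'a::euclidean_space \<Rightarrow> real"
  assumes "sphere_integrable f" "sphere_integrable g" "sphere_integrable h"
    and "\<And>u. u \<in> sphere 0 1 \<Longrightarrow> h u + k u = f u + g u"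
  shows "sphere_integral h + sphere_integral k = sphere_integral f + sphere_integral g"
proof -
  let ?I = "\<lambda>f x. indicator (ball 0 1 - {0}) x * f (x /\<^sub>R norm x)"
  have pointwise: "?I k x = ?I f x + ?I g x - ?I h x" for x :: 'a
  proof (cases "x \<in> ball 0 1 - {0}")
    case True
    then have "h (x /\<^sub>R norm x) + k (x /\<^sub>R norm x) = f (x /\<^sub>R norm x) + g (x /\<^sub>R norm x)"
      by (intro assms(4)) simp
    with True show ?thesis
      by simp
  qed simp
  have int: "integrable lebesgue (?I f)" "integrable lebesgue (?I g)" "integrable lebesgue (?I h)"
    using assms(1-3) unfolding sphere_integrable_def by auto
  have "integral\<^sup>L lebesgue (?I k) = integral\<^sup>L lebesgue (\<lambda>x. ?I f x + ?I g x - ?I h x)"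
    using pointwise by (rule Bochner_Integration.integral_cong[OF refl])
  also have "\<dots> = integral\<^sup>L lebesgue (?I f) + integral\<^sup>L lebesgue (?I g) - integral\<^sup>L lebesgue (?I h)"
    by (simp only: Bochner_Integration.integral_diff[OF Bochner_Integration.integrable_add[OF int(1,2)] int(3)]
        Bochner_Integration.integral_add[OF int(1,2)])
  finally have "integral\<^sup>L lebesgue (?I h) + integral\<^sup>L lebesgue (?I k)
      = integral\<^sup>L lebesgue (?I f) + integral\<^sup>L lebesgue (?I g)"
    by linarith
  then show ?thesis
    unfolding sphere_integral_def by (simp only: distrib_left[symmetric])
qed

lemma sphere_integrable_radial_gauss:
  fixes M :: "'a::euclidean_space set" and \<phi> \<psi> :: "'a \<Rightarrow> real"
  assumes M: "convex_body_o M"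
    and \<phi>: "continuous_on (sphere 0 1) \<phi>" "\<phi> 0 = 0" and \<psi>: "continuous_on (sphere 0 1) \<psi>"
  shows "sphere_integrable (\<lambda>u. \<phi> (radial_gauss M u) * \<psi> u)"
proof -
  let ?R = "regular_directions M"
  have "continuous_on ?R (\<lambda>u. \<phi> (radial_gauss M u))"
    using continuous_on_radial_gauss[OF M] radial_gauss_regular(2)
    by (intro continuous_on_compose2[OF \<phi>(1)]) auto
  then have "continuous_on ?R (\<lambda>u. \<phi> (radial_gauss M u) * \<psi> u)"
    using continuous_on_subset[OF \<psi> regular_directions_subset_sphere] by (rule continuous_on_mult)
  then have meas: "(\<lambda>u. indicator ?R u *\<^sub>R (\<phi> (radial_gauss M u) * \<psi> u)) \<in> borel_measurable borel"
    by (rule borel_measurable_continuous_on_indicator[OF borel_regular_directions[OF M]])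
  obtain B1 where B1: "B1 \<ge> 0" "\<And>v. v \<in> sphere 0 1 \<Longrightarrow> \<bar>\<phi> v\<bar> \<le> B1"
    using continuous_on_compact_bound[OF compact_sphere \<phi>(1)] by auto
  obtain B2 where B2: "\<And>u. u \<in> sphere 0 1 \<Longrightarrow> \<bar>\<psi> u\<bar> \<le> B2"
    using continuous_on_compact_bound[OF compact_sphere \<psi>] by auto
  show ?thesis
  proof (rule sphere_integrableI[OF meas, where B = "B1 * B2"])
    fix u :: 'a
    assume u: "u \<in> sphere 0 1"
    show "\<phi> (radial_gauss M u) * \<psi> u = indicator ?R u *\<^sub>R (\<phi> (radial_gauss M u) * \<psi> u)"
      using radial_gauss_singular[OF u] \<phi>(2) by (cases "u \<in> ?R") simp_all
    have "\<bar>\<phi> (radial_gauss M u)\<bar> \<le> B1"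
    proof (cases "u \<in> ?R")
      case True
      then show ?thesis
        by (rule B1(2)[OF radial_gauss_regular(2)])
    next
      case False
      then show ?thesis
        using B1(1) by (simp add: radial_gauss_singular[OF u False] \<phi>(2))
    qed
    then show "\<bar>\<phi> (radial_gauss M u) * \<psi> u\<bar> \<le> B1 * B2"
      unfolding abs_mult by (rule mult_mono[OF _ B2[OF u] B1(1) abs_ge_zero])
  qed
qed

definition mixed_quermass_integrand ::
    "real \<Rightarrow> real \<Rightarrow> real \<Rightarrow> 'a::euclidean_space set \<Rightarrow> 'a set \<Rightarrow> 'a set \<Rightarrow> 'a \<Rightarrow> real" where
  "mixed_quermass_integrand p q j M N Q u =
     (support_fun N (radial_gauss M u) / support_fun M (radial_gauss M u)) powr p
     * radial_fun M u powr q * radial_fun Q u powr (real DIM('a) - q - j)"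

lemma mixed_quermass_eq_sphere_integral:
  fixes M N Q :: "'a::euclidean_space set"
  shows "mixed_quermass p q j M N Q = sphere_integral (mixed_quermass_integrand p q j M N Q) / real DIM('a)"
  unfolding mixed_quermass_def mixed_quermass_integrand_def by simp

lemma sphere_integrable_mixed_quermass_integrand:
  fixes M N Q :: "'a::euclidean_space set"
  assumes M: "convex_body_o M" and N: "convex_body_o N" and Q: "star_body_o Q"
  shows "sphere_integrable (mixed_quermass_integrand p q j M N Q)"
proof -
  have cM: "compact M" "M \<noteq> {}" "0 \<in> interior M" and cN: "compact N" "N \<noteq> {}" "0 \<in> interior N"
    using M N interior_subset by (auto simp: convex_body_o_def)
  have pos: "0 < support_fun M v" "0 < support_fun N v" if "v \<in> sphere 0 1" for v
    using that by (auto intro!: support_fun_pos cM(1,3) cN(1,3))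
  have "continuous_on (sphere 0 1) (\<lambda>v. (support_fun N v / support_fun M v) powr p)"
    using pos by (intro continuous_on_powr continuous_on_divide continuous_on_const
        continuous_on_support_fun cM(1,2) cN(1,2)) fastforce+
  moreover have "(support_fun N 0 / support_fun M 0) powr p = 0"
    using support_fun_zero[OF cM(2)] support_fun_zero[OF cN(2)] by simp
  moreover have "continuous_on (sphere 0 1)
      (\<lambda>u. radial_fun M u powr q * radial_fun Q u powr (real DIM('a) - q - j))"
  proof -
    have "\<forall>u\<in>sphere 0 1. radial_fun M u \<noteq> 0"
    proof
      fix u :: 'a assume "u \<in> sphere 0 1"
      then have "u \<noteq> 0"
        by auto
      then show "radial_fun M u \<noteq> 0"
        using radial_fun_convex_body_o_pos[OF M] by (metis less_irrefl)
    qed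
    moreover have "\<forall>u\<in>sphere 0 1. radial_fun Q u \<noteq> 0" "continuous_on (sphere 0 1) (radial_fun Q)"
      using Q by (auto simp: star_body_o_def)
    ultimately show ?thesis
      by (intro continuous_on_mult continuous_on_powr continuous_on_const continuous_on_radial_fun[OF M])
  qed
  ultimately show ?thesis
    using sphere_integrable_radial_gauss[OF M] unfolding mixed_quermass_integrand_def mult.assoc
    by blast
qed

lemma mixed_quermass_valuation_convex:
  fixes M N1 N2 Q :: "'a::euclidean_space set"
  assumes M: "convex_body_o M" and Q: "star_body_o Q"
    and N: "convex_body_o N1" "convex_body_o N2" "convex_body_o (N1 \<union> N2)"
  shows "mixed_quermass p q j M (N1 \<union> N2) Q + mixed_quermass p q j M (N1 \<inter> N2) Q
       = mixed_quermass p q j M N1 Q + mixed_quermass p q j M N2 Q"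
proof -
  have "0 \<in> N1" "0 \<in> N2"
    using N(1,2) convex_body_o_zero_mem by blast+
  then have K: "compact N1" "compact N2" "N1 \<noteq> {}" "N2 \<noteq> {}" "N1 \<inter> N2 \<noteq> {}" "convex (N1 \<union> N2)"
    using N by (auto simp: convex_body_o_def)
  have "mixed_quermass_integrand p q j M (N1 \<union> N2) Q u + mixed_quermass_integrand p q j M (N1 \<inter> N2) Q u
      = mixed_quermass_integrand p q j M N1 Q u + mixed_quermass_integrand p q j M N2 Q u" for u
    unfolding mixed_quermass_integrand_def support_fun_Un[OF K(1-4)] support_fun_Int[OF K(1,2,5,6)]
    by (simp add: max_def min_def)
  then have "sphere_integral (mixed_quermass_integrand p q j M (N1 \<union> N2) Q)
      + sphere_integral (mixed_quermass_integrand p q j M (N1 \<inter> N2) Q)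
      = sphere_integral (mixed_quermass_integrand p q j M N1 Q)
      + sphere_integral (mixed_quermass_integrand p q j M N2 Q)"
    by (intro sphere_integral_valuation sphere_integrable_mixed_quermass_integrand M N Q)
  then show ?thesis
    unfolding mixed_quermass_eq_sphere_integral by (simp add: add_divide_distrib[symmetric])
qed

lemma mixed_quermass_valuation_star:
  fixes M N Q1 Q2 :: "'a::euclidean_space set"
  assumes M: "convex_body_o M" and N: "convex_body_o N" and Q: "star_body_o Q1" "star_body_o Q2"
  shows "mixed_quermass p q j M N (Q1 \<union> Q2) + mixed_quermass p q j M N (Q1 \<inter> Q2)
       = mixed_quermass p q j M N Q1 + mixed_quermass p q j M N Q2"
proof -
  have "mixed_quermass_integrand p q j M N (Q1 \<union> Q2) u + mixed_quermass_integrand p q j M N (Q1 \<inter> Q2) u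
      = mixed_quermass_integrand p q j M N Q1 u + mixed_quermass_integrand p q j M N Q2 u"
    if "u \<in> sphere 0 1" for u
  proof -
    have "u \<noteq> 0"
      using that by auto
    then show ?thesis
      unfolding mixed_quermass_integrand_def star_body_o_radial_fun_Un[OF Q \<open>u \<noteq> 0\<close>]
        star_body_o_radial_fun_Int[OF Q \<open>u \<noteq> 0\<close>]
      by (simp add: max_def min_def)
  qed
  then have "sphere_integral (mixed_quermass_integrand p q j M N (Q1 \<union> Q2))
      + sphere_integral (mixed_quermass_integrand p q j M N (Q1 \<inter> Q2))
      = sphere_integral (mixed_quermass_integrand p q j M N Q1)
      + sphere_integral (mixed_quermass_integrand p q j M N Q2)"
    by (intro sphere_integral_valuation sphere_integrable_mixed_quermass_integrand M N Q
        star_body_o_Un)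
  then show ?thesis
    unfolding mixed_quermass_eq_sphere_integral by (simp add: add_divide_distrib[symmetric])
qed

theorem proposition4p3:
  fixes p q j :: real and M :: "'a::euclidean_space set"
  assumes "j \<noteq> real DIM('a)" and "convex_body_o M"
  shows "(\<forall>Q N1 N2. star_body_o Q \<and> convex_body_o N1 \<and> convex_body_o N2
            \<and> convex_body_o (N1 \<union> N2) \<longrightarrow>
            mixed_quermass p q j M (N1 \<union> N2) Q + mixed_quermass p q j M (N1 \<inter> N2) Q
            = mixed_quermass p q j M N1 Q + mixed_quermass p q j M N2 Q)
       \<and> (\<forall>N Q1 Q2. convex_body_o N \<and> star_body_o Q1 \<and> star_body_o Q2 \<longrightarrow>
            mixed_quermass p q j M N (Q1 \<union> Q2) + mixed_quermass p q j M N (Q1 \<inter> Q2)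
            = mixed_quermass p q j M N Q1 + mixed_quermass p q j M N Q2)"
  using mixed_quermass_valuation_convex[OF assms(2)] mixed_quermass_valuation_star[OF assms(2)]
  by blast

end
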